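(* Let $\gamma$ be an ordinal of $\mathrm{OT}$, $\perp\!\!\!\perp$ any pole, and $\beta<\gamma$. For every $\mathcal L_{\mathrm R}^{<\beta}$-sentence $A$ and every number $a$: (1) $\langle{\perp\!\!\!\perp},<\gamma\rangle\models a\,F_\beta\,\ulcorner A\urcorner$ if and only if $\langle{\perp\!\!\!\perp},<\gamma\rangle\models a\in\|A\|$; (2) $\langle{\perp\!\!\!\perp},<\gamma\rangle\models a\,T_\beta\,\ulcorner A\urcorner$ if and only if $\langle{\perp\!\!\!\perp},<\gamma\rangle\models a\in|A|$.
   Context: $\mathcal{L}$ is the language of $\mathsf{PA}$ ($\to,\forall,=$, constant $0$, function symbols for all primitive recursive functions); $\langle x,y\rangle$ primitive recursive pairing with projections $(\cdot)_0,(\cdot)_1$; $e\cdot m\simeq n$: the $e$-th partial recursive function on $m$ halts with output $n$. Fixed Gödel numbering. $\mathrm{OT}$ is a standard notation system for predicative ordinals. $\mathcal L_{\mathrm R}^{<\gamma}$ is $\mathcal L$ plus unary $x\in{\perp\!\!\!\perp}$ and binary $x\,F_\beta\,y$, $x\,T_\beta\,y$ for $\beta<\gamma$; $\mathcal L_{\perp\!\!\!\perp}=\mathcal L\cup\{\in{\perp\!\!\!\perp}\}$; $\mathrm{Sent}^{<\beta}_{\mathrm R}$ is the set of codes of $\mathcal L_{\mathrm R}^{<\beta}$-sentences. Explicit refutation/realisation formulas, by recursion on $A$: $s\in\|P\|:=P\to s\in{\perp\!\!\!\perp}$ ($P$ atomic of $\mathcal L_{\perp\!\!\!\perp}$); $s\in\|t\,F_\beta\,u\|:=s\,F_\beta\,(t\,\dot\in\|u\|)$;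 $s\in\|t\,T_\beta\,u\|:=s\,F_\beta\,(t\,\dot\in|u|)$; $s\in\|A\to B\|:=(s)_0\in|A|\wedge(s)_1\in\|B\|$; $s\in\|\forall xA(x)\|:=(s)_1\in\|A((s)_0)\|$; $s\in|A|:=\forall a(a\in\|A\|\to\langle s,a\rangle\in{\perp\!\!\!\perp})$; here $x\,\dot\in\|y\|$, $x\,\dot\in|y|$ are primitive recursive function symbols with $x\,\dot\in\|\ulcorner A\urcorner\|=\ulcorner\dot x\in\|A\|\urcorner$ and $x\,\dot\in|\ulcorner A\urcorner|=\ulcorner\dot x\in|A|\urcorner$ ($\dot x$: numeral of $x$) for sentences $A$, returning non-sentence codes when $y$ is not a sentence code. A pole is $\perp\!\!\!\perp\subseteq\mathbb N$ with ($e\cdot m\simeq n$ and $n\in\perp\!\!\!\perp$) $\Rightarrow\langle e,m\rangle\in\perp\!\!\!\perp$. For $\mathcal L_{\mathrm R}^{<\gamma}$-sentences define $\|A\|^{<\gamma}_{\perp\!\!\!\perp}\subseteq\mathbb N$ inductively: $n\in\|s=t\|$ iff ($s=t$ true in $\mathbb N$ implies $n\in\perp\!\!\!\perp$); $n\in\|m\in{\perp\!\!\!\perp}\|$ iff ($m\in\perp\!\!\!\perp$ implies $n\in\perp\!\!\!\perp$); $n\in\|m\,F_\beta\,l\|$ iff $l=\ulcorner A\urcorner$ for some $\mathcal L_{\mathrm R}^{<\beta}$-sentence $A$ and $n\in\|\bar m\in\|A\|\|$; $n\in\|m\,T_\beta\,l\|$ iff $l=\ulcorner A\urcorner$ for some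 $\mathcal L_{\mathrm R}^{<\beta}$-sentence $A$ and $n\in\|\bar m\in|A|\|$; $\|A\to B\|=\{n:(n)_0\in|A|,(n)_1\in\|B\|\}$; $\|\forall xA\|=\{n:(n)_1\in\|A(\overline{(n)_0})\|\}$; $|A|^{<\gamma}_{\perp\!\!\!\perp}=\{n:\forall m\in\|A\|\ \langle n,m\rangle\in\perp\!\!\!\perp\}$. Let $\mathbb F^\beta=\{(n,\ulcorner A\urcorner):A\in\mathrm{Sent}^{<\beta}_{\mathrm R},n\in\|A\|^{<\gamma}_{\perp\!\!\!\perp}\}$, $\mathbb T^\beta=\{(n,\ulcorner A\urcorner):A\in\mathrm{Sent}^{<\beta}_{\mathrm R},n\in|A|^{<\gamma}_{\perp\!\!\!\perp}\}$. $\langle{\perp\!\!\!\perp},<\gamma\rangle$ denotes the $\mathcal L_{\mathrm R}^{<\gamma}$-structure $\langle\mathbb N,\perp\!\!\!\perp,(\mathbb F^\beta)_{\beta<\gamma},(\mathbb T^\beta)_{\beta<\gamma}\rangle$. *)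

theory Defs
  imports Main "HOL-Library.Countable" "HOL-Library.Nat_Bijection"
begin

definition pair :: "nat \<Rightarrow> nat \<Rightarrow> nat" where
  "pair x y = prod_encode (x, y)"
definition p0 :: "nat \<Rightarrow> nat" where "p0 n = fst (prod_decode n)"
definition p1 :: "nat \<Rightarrow> nat" where "p1 n = snd (prod_decode n)"

datatype recf = RZ | RS | RId nat | RCn recf "recf list" | RPr recf recf | RMn recf

instance recf :: countable by countable_datatype

inductive reval :: "recf \<Rightarrow> nat list \<Rightarrow> nat \<Rightarrow> bool" where
  "reval RZ xs 0"
| "reval RS (x # xs) (Suc x)"
| "i < length xs \<Longrightarrow> reval (RId i) xs (xs ! i)"
| "length ys = length gs \<Longrightarrow> (\<forall>i < length gs. reval (gs ! i) xs (ys ! i))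
     \<Longrightarrow> reval f ys y \<Longrightarrow> reval (RCn f gs) xs y"
| "reval f xs y \<Longrightarrow> reval (RPr f g) (0 # xs) y"
| "reval (RPr f g) (n # xs) y \<Longrightarrow> reval g (y # n # xs) z \<Longrightarrow> reval (RPr f g) (Suc n # xs) z"
| "reval f (n # xs) 0 \<Longrightarrow> (\<forall>k < n. \<exists>v. v \<noteq> 0 \<and> reval f (k # xs) v) \<Longrightarrow> reval (RMn f) xs n"

text \<open>Kleene application e.m ~ n, with the fixed Goedel numbering to_nat of recf.\<close>
definition kapp :: "nat \<Rightarrow> nat \<Rightarrow> nat \<Rightarrow> bool" where
  "kapp e m n \<longleftrightarrow> (\<exists>f. to_nat f = e \<and> reval f [m] n)"

definition is_pole :: "nat set \<Rightarrow> bool" where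
  "is_pole P \<longleftrightarrow> (\<forall>e m n. kapp e m n \<and> n \<in> P \<longrightarrow> pair e m \<in> P)"

datatype prfn = Zf | Sf | Pf nat | Cnf prfn "prfn list" | Prf prfn prfn

instance prfn :: countable by countable_datatype

definition arg :: "nat list \<Rightarrow> nat \<Rightarrow> nat" where
  "arg xs i = (if i < length xs then xs ! i else 0)"

fun preval :: "prfn \<Rightarrow> nat list \<Rightarrow> nat" where
  "preval Zf xs = 0"
| "preval Sf xs = Suc (arg xs 0)"
| "preval (Pf i) xs = arg xs i"
| "preval (Cnf f gs) xs = preval f (map (\<lambda>g. preval g xs) gs)"
| "preval (Prf f g) xs =
     rec_nat (preval f (tl xs)) (\<lambda>n r. preval g (r # n # tl xs)) (arg xs 0)"

section \<open>Syntax of L_R (de Bruijn indices for variables)\<close>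

datatype 'o trm = Var nat | Zero | Fn prfn "'o trm list"
  | Pr "'o trm" "'o trm" | Fst "'o trm" | Snd "'o trm"
  | DotRef "'o trm" "'o trm"
  | DotReal "'o trm" "'o trm"

datatype 'o fm = Eq "'o trm" "'o trm" | InPole "'o trm"
  | Ff 'o "'o trm" "'o trm" | Tf 'o "'o trm" "'o trm"
  | Imp "'o fm" "'o fm" | All "'o fm"

instance trm :: (countable) countable by countable_datatype
instance fm :: (countable) countable by countable_datatype

fun num :: "nat \<Rightarrow> 'o trm" where
  "num 0 = Zero"
| "num (Suc k) = Fn Sf [num k]"

fun liftt :: "nat \<Rightarrow> 'o trm \<Rightarrow> 'o trm" where
  "liftt k (Var i) = Var (if i < k then i else Suc i)"
| "liftt k Zero = Zero"
| "liftt k (Fn f ts) = Fn f (map (liftt k) ts)"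
| "liftt k (Pr t u) = Pr (liftt k t) (liftt k u)"
| "liftt k (Fst t) = Fst (liftt k t)"
| "liftt k (Snd t) = Snd (liftt k t)"
| "liftt k (DotRef t u) = DotRef (liftt k t) (liftt k u)"
| "liftt k (DotReal t u) = DotReal (liftt k t) (liftt k u)"

fun substt :: "nat \<Rightarrow> 'o trm \<Rightarrow> 'o trm \<Rightarrow> 'o trm" where
  "substt k s (Var i) = (if i < k then Var i else if i = k then s else Var (i - 1))"
| "substt k s Zero = Zero"
| "substt k s (Fn f ts) = Fn f (map (substt k s) ts)"
| "substt k s (Pr t u) = Pr (substt k s t) (substt k s u)"
| "substt k s (Fst t) = Fst (substt k s t)"
| "substt k s (Snd t) = Snd (substt k s t)"
| "substt k s (DotRef t u) = DotRef (substt k s t) (substt k s u)"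
| "substt k s (DotReal t u) = DotReal (substt k s t) (substt k s u)"

fun fvt :: "'o trm \<Rightarrow> nat set" where
  "fvt (Var i) = {i}"
| "fvt Zero = {}"
| "fvt (Fn f ts) = (\<Union>t\<in>set ts. fvt t)"
| "fvt (Pr t u) = fvt t \<union> fvt u"
| "fvt (Fst t) = fvt t"
| "fvt (Snd t) = fvt t"
| "fvt (DotRef t u) = fvt t \<union> fvt u"
| "fvt (DotReal t u) = fvt t \<union> fvt u"

fun liftf :: "nat \<Rightarrow> 'o fm \<Rightarrow> 'o fm" where
  "liftf k (Eq t u) = Eq (liftt k t) (liftt k u)"
| "liftf k (InPole t) = InPole (liftt k t)"
| "liftf k (Ff b t u) = Ff b (liftt k t) (liftt k u)"
| "liftf k (Tf b t u) = Tf b (liftt k t) (liftt k u)"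
| "liftf k (Imp A B) = Imp (liftf k A) (liftf k B)"
| "liftf k (All A) = All (liftf (Suc k) A)"

fun substf :: "nat \<Rightarrow> 'o trm \<Rightarrow> 'o fm \<Rightarrow> 'o fm" where
  "substf k s (Eq t u) = Eq (substt k s t) (substt k s u)"
| "substf k s (InPole t) = InPole (substt k s t)"
| "substf k s (Ff b t u) = Ff b (substt k s t) (substt k s u)"
| "substf k s (Tf b t u) = Tf b (substt k s t) (substt k s u)"
| "substf k s (Imp A B) = Imp (substf k s A) (substf k s B)"
| "substf k s (All A) = All (substf (Suc k) (liftt 0 s) A)"

definition inst :: "'o fm \<Rightarrow> 'o trm \<Rightarrow> 'o fm" where
  "inst A t = substf 0 t A"

fun fvf :: "'o fm \<Rightarrow> nat set" where
  "fvf (Eq t u) = fvt t \<union> fvt u"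
| "fvf (InPole t) = fvt t"
| "fvf (Ff b t u) = fvt t \<union> fvt u"
| "fvf (Tf b t u) = fvt t \<union> fvt u"
| "fvf (Imp A B) = fvf A \<union> fvf B"
| "fvf (All A) = (\<lambda>i. i - 1) ` (fvf A - {0})"

definition sentence :: "'o fm \<Rightarrow> bool" where
  "sentence A \<longleftrightarrow> fvf A = {}"

fun ords :: "'o fm \<Rightarrow> 'o set" where
  "ords (Eq t u) = {}"
| "ords (InPole t) = {}"
| "ords (Ff b t u) = {b}"
| "ords (Tf b t u) = {b}"
| "ords (Imp A B) = ords A \<union> ords B"
| "ords (All A) = ords A"

definition sent_lt :: "'o::order \<Rightarrow> 'o fm \<Rightarrow> bool" where
  "sent_lt \<beta> A \<longleftrightarrow> sentence A \<and> (\<forall>b \<in> ords A. b < \<beta>)"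

fun fsize :: "'o fm \<Rightarrow> nat" where
  "fsize (Imp A B) = Suc (fsize A + fsize B)"
| "fsize (All A) = Suc (fsize A)"
| "fsize _ = 1"

lemma fsize_substf[simp]: "fsize (substf k s A) = fsize A"
  by (induction A arbitrary: k s) auto

lemma fsize_liftf[simp]: "fsize (liftf k A) = fsize A"
  by (induction A arbitrary: k) auto

lemma fsize_pos: "0 < fsize A"
  by (cases A) auto

definition Fls :: "'o fm" where "Fls = Eq Zero (num 1)"
definition Conj :: "'o fm \<Rightarrow> 'o fm \<Rightarrow> 'o fm" where
  "Conj A B = Imp (Imp A (Imp B Fls)) Fls"

function refF :: "'o trm \<Rightarrow> 'o fm \<Rightarrow> 'o fm" and realF :: "'o trm \<Rightarrow> 'o fm \<Rightarrow> 'o fm" where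
  "refF s (Eq t u) = Imp (Eq t u) (InPole s)"
| "refF s (InPole t) = Imp (InPole t) (InPole s)"
| "refF s (Ff b t u) = Ff b s (DotRef t u)"
| "refF s (Tf b t u) = Ff b s (DotReal t u)"
| "refF s (Imp A B) = Conj (realF (Fst s) A) (refF (Snd s) B)"
| "refF s (All A) = refF (Snd s) (inst A (Fst s))"
| "realF s A = All (Imp (refF (Var 0) (liftf 0 A)) (InPole (Pr (liftt 0 s) (Var 0))))"
  by pat_completeness auto
termination
  by (relation "measure (case_sum (\<lambda>(s, A). 2 * fsize A) (\<lambda>(s, A). 2 * fsize A + 1))")
     (auto simp: inst_def)

definition code :: "'o::countable fm \<Rightarrow> nat" where
  "code A = to_nat A"

text \<open>x dot-in ||y|| and x dot-in |y|; on non-sentence codes they return the code of the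
  non-sentence  v0 = v0 .\<close>
definition dotref :: "'o::countable itself \<Rightarrow> nat \<Rightarrow> nat \<Rightarrow> nat" where
  "dotref _ x y = (if \<exists>A::'o fm. sentence A \<and> code A = y
     then code (refF (num x) (THE A::'o fm. sentence A \<and> code A = y))
     else code (Eq (Var 0) (Var 0) :: 'o fm))"

definition dotreal :: "'o::countable itself \<Rightarrow> nat \<Rightarrow> nat \<Rightarrow> nat" where
  "dotreal _ x y = (if \<exists>A::'o fm. sentence A \<and> code A = y
     then code (realF (num x) (THE A::'o fm. sentence A \<and> code A = y))
     else code (Eq (Var 0) (Var 0) :: 'o fm))"

fun teval :: "'o::countable trm \<Rightarrow> (nat \<Rightarrow> nat) \<Rightarrow> nat" where
  "teval (Var i) e = e i"
| "teval Zero e = 0"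
| "teval (Fn f ts) e = preval f (map (\<lambda>t. teval t e) ts)"
| "teval (Pr t u) e = pair (teval t e) (teval u e)"
| "teval (Fst t) e = p0 (teval t e)"
| "teval (Snd t) e = p1 (teval t e)"
| "teval (DotRef t u) e = dotref TYPE('o) (teval t e) (teval u e)"
| "teval (DotReal t u) e = dotreal TYPE('o) (teval t e) (teval u e)"

definition shift :: "nat \<Rightarrow> (nat \<Rightarrow> nat) \<Rightarrow> nat \<Rightarrow> nat" where
  "shift n e = (\<lambda>i. case i of 0 \<Rightarrow> n | Suc j \<Rightarrow> e j)"

fun sat :: "nat set \<Rightarrow> ('o \<Rightarrow> (nat \<times> nat) set) \<Rightarrow> ('o \<Rightarrow> (nat \<times> nat) set)
            \<Rightarrow> (nat \<Rightarrow> nat) \<Rightarrow> 'o::countable fm \<Rightarrow> bool" where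
  "sat P FF TT e (Eq t u) \<longleftrightarrow> teval t e = teval u e"
| "sat P FF TT e (InPole t) \<longleftrightarrow> teval t e \<in> P"
| "sat P FF TT e (Ff b t u) \<longleftrightarrow> (teval t e, teval u e) \<in> FF b"
| "sat P FF TT e (Tf b t u) \<longleftrightarrow> (teval t e, teval u e) \<in> TT b"
| "sat P FF TT e (Imp A B) \<longleftrightarrow> (sat P FF TT e A \<longrightarrow> sat P FF TT e B)"
| "sat P FF TT e (All A) \<longleftrightarrow> (\<forall>n. sat P FF TT (shift n e) A)"

text \<open>One step of the inductive definition, with the sets ||B|| needed in the clauses for
  atoms  m F_b l,  m T_b l  supplied by an oracle Orc b B (B an L_R^{<b}-sentence).
  Terms of sentences are closed, so they are evaluated in an arbitrary environment.\<close>
function rs :: "nat set \<Rightarrow> ('o \<Rightarrow> 'o fm \<Rightarrow> nat set) \<Rightarrow> 'o::{countable,order} fm \<Rightarrow> nat set" where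
  "rs P Orc (Eq t u) = {n. teval t (\<lambda>_. 0) = teval u (\<lambda>_. 0) \<longrightarrow> n \<in> P}"
| "rs P Orc (InPole t) = {n. teval t (\<lambda>_. 0) \<in> P \<longrightarrow> n \<in> P}"
| "rs P Orc (Ff b t u) = {n. \<exists>A. sent_lt b A \<and> teval u (\<lambda>_. 0) = code A
                          \<and> n \<in> Orc b (refF (num (teval t (\<lambda>_. 0))) A)}"
| "rs P Orc (Tf b t u) = {n. \<exists>A. sent_lt b A \<and> teval u (\<lambda>_. 0) = code A
                          \<and> n \<in> Orc b (realF (num (teval t (\<lambda>_. 0))) A)}"
| "rs P Orc (Imp A B) = {n. (\<forall>m \<in> rs P Orc A. pair (p0 n) m \<in> P) \<and> p1 n \<in> rs P Orc B}"
| "rs P Orc (All A) = {n. p1 n \<in> rs P Orc (inst A (num (p0 n)))}"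
  by pat_completeness auto
termination
  by (relation "measure (\<lambda>(P, Orc, A). fsize A)") (auto simp: inst_def)

text \<open>NR P beta B = ||B|| for L_R^{<beta}-sentences B, by well-founded recursion on beta.\<close>
definition NR :: "nat set \<Rightarrow> 'o::{countable,wellorder} \<Rightarrow> 'o fm \<Rightarrow> nat set" where
  "NR P = wfrec {(x, y). x < y} (\<lambda>R \<beta> A. rs P (\<lambda>\<delta> B. if \<delta> < \<beta> then R \<delta> B else {}) A)"

definition refset :: "nat set \<Rightarrow> 'o::{countable,wellorder} \<Rightarrow> 'o fm \<Rightarrow> nat set" where
  "refset P \<gamma> A = NR P \<gamma> A"

definition realset :: "nat set \<Rightarrow> 'o::{countable,wellorder} \<Rightarrow> 'o fm \<Rightarrow> nat set" where
  "realset P \<gamma> A = {n. \<forall>m \<in> refset P \<gamma> A. pair n m \<in> P}"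

definition FFset :: "nat set \<Rightarrow> 'o::{countable,wellorder} \<Rightarrow> 'o \<Rightarrow> (nat \<times> nat) set" where
  "FFset P \<gamma> \<beta> = {(n, code A) | n A. sent_lt \<beta> A \<and> n \<in> refset P \<gamma> A}"

definition TTset :: "nat set \<Rightarrow> 'o::{countable,wellorder} \<Rightarrow> 'o \<Rightarrow> (nat \<times> nat) set" where
  "TTset P \<gamma> \<beta> = {(n, code A) | n A. sent_lt \<beta> A \<and> n \<in> realset P \<gamma> A}"

text \<open><pole, <gamma> |= phi  (phi an L_R^{<gamma}-sentence; symbols F_b, T_b with b >= gamma
  do not belong to the language and are interpreted as empty).\<close>
definition models :: "nat set \<Rightarrow> 'o::{countable,wellorder} \<Rightarrow> 'o fm \<Rightarrow> bool" where
  "models P \<gamma> \<phi> = sat P (\<lambda>b. if b < \<gamma> then FFset P \<gamma> b else {})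
                          (\<lambda>b. if b < \<gamma> then TTset P \<gamma> b else {}) (\<lambda>_. 0) \<phi>"

end

theory Submission
  imports Defs
begin

text \<open>Both sides of each equivalence are governed by one set. In a structure whose
  \<open>F\<close>-relations are \<open>FF\<close>, the formula \<open>s \<in> \<parallel>A\<parallel>\<close> holds exactly when the value of \<open>s\<close>
  lies in a set \<open>ref_sem\<close> computed by recursion on \<open>A\<close>, and \<open>s \<in> |A|\<close> exactly when that
  value realises every element of this set. In the structure \<open>\<langle>\<bottom>\<bottom>, <\<gamma>\<rangle>\<close> the set is
  \<open>\<parallel>A\<parallel>\<^sup><\<^sup>\<gamma>\<close>: both obey the same clauses, and at an atom \<open>m F\<^sub>b l\<close> the structure
  consults \<open>F\<^sub>b\<close> at the code of \<open>m \<in> \<parallel>l\<parallel>\<close>, which names an \<open>L\<^sub>R\<^sup><\<^sup>b\<close>-sentence, and the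
  refutation set of such a sentence is the same at every level above \<open>b\<close>.\<close>

definition env_insert :: "nat \<Rightarrow> nat \<Rightarrow> (nat \<Rightarrow> nat) \<Rightarrow> nat \<Rightarrow> nat" where
  "env_insert k v e = (\<lambda>i. if i < k then e i else if i = k then v else e (i - 1))"

lemma shift_0 [simp]: "shift n e 0 = n"
  by (simp add: shift_def)

lemma env_insert_0: "env_insert 0 v e = shift v e"
  by (auto simp: env_insert_def shift_def fun_eq_iff split: nat.split)

lemma env_insert_Suc_shift: "env_insert (Suc k) v (shift m e) = shift m (env_insert k v e)"
  by (auto simp: env_insert_def shift_def fun_eq_iff split: nat.split)

lemma teval_liftt: "teval (liftt k t) (env_insert k v e) = teval t e"
  by (induction t arbitrary: k e) (auto simp: env_insert_def cong: map_cong)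

lemma teval_liftt_0: "teval (liftt 0 t) (shift v e) = teval t e"
  using teval_liftt[of 0 t v e] by (simp add: env_insert_0)

lemma teval_substt: "teval (substt k s t) e = teval t (env_insert k (teval s e) e)"
  by (induction t arbitrary: k e) (auto simp: env_insert_def cong: map_cong)

lemma teval_num [simp]: "teval (num k) e = k"
  by (induction k) (auto simp: arg_def)

lemma fvt_num [simp]: "fvt (num k) = {}"
  by (induction k) auto

lemma mem_fvf_All: "i \<in> fvf (All A) \<longleftrightarrow> Suc i \<in> fvf A"
  by (auto simp: image_iff intro!: bexI[of _ "Suc i"]) (metis Suc_pred neq0_conv)

lemma mem_fvt_liftt: "i \<in> fvt (liftt k t) \<longleftrightarrow> i < k \<and> i \<in> fvt t \<or> k < i \<and> i - 1 \<in> fvt t"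
  by (induction t arbitrary: k) auto

lemma mem_fvf_liftf: "i \<in> fvf (liftf k A) \<longleftrightarrow> i < k \<and> i \<in> fvf A \<or> k < i \<and> i - 1 \<in> fvf A"
proof (induction A arbitrary: i k)
  case (All A)
  show ?case
    using All[of "Suc i" "Suc k"] by (simp only: liftf.simps mem_fvf_All) auto
qed (auto simp: mem_fvt_liftt)

lemma mem_fvt_substt:
  "i \<in> fvt (substt k s t) \<Longrightarrow> i < k \<and> i \<in> fvt t \<or> k \<le> i \<and> Suc i \<in> fvt t \<or> i \<in> fvt s"
  by (induction t arbitrary: k) (auto split: if_splits)

lemma mem_fvf_substf:
  "i \<in> fvf (substf k s A) \<Longrightarrow> i < k \<and> i \<in> fvf A \<or> k \<le> i \<and> Suc i \<in> fvf A \<or> i \<in> fvt s"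
proof (induction A arbitrary: i k s)
  case (All A)
  show ?case
    using All.IH[of "Suc i" "Suc k" "liftt 0 s"] All.prems
    by (simp only: substf.simps mem_fvf_All) (auto simp: mem_fvt_liftt)
qed (fastforce dest: mem_fvt_substt)+

lemma ords_liftf [simp]: "ords (liftf k A) = ords A"
  by (induction A arbitrary: k) auto

lemma ords_substf [simp]: "ords (substf k s A) = ords A"
  by (induction A arbitrary: k s) auto

lemma ords_refF_realF: "ords (refF s A) = ords A" "ords (realF s A) = ords A"
  by (induction s A and s A rule: refF_realF.induct) (auto simp: Conj_def Fls_def inst_def)

lemma fvf_refF_realF: "fvf (refF s A) \<subseteq> fvf A \<union> fvt s" "fvf (realF s A) \<subseteq> fvf A \<union> fvt s"
proof (induction s A and s A rule: refF_realF.induct)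
  case (6 s A)
  show ?case
  proof
    fix i
    assume "i \<in> fvf (refF s (All A))"
    then have "i \<in> fvf (substf 0 (Fst s) A) \<or> i \<in> fvt s"
      using 6 by (auto simp: inst_def)
    then show "i \<in> fvf (All A) \<union> fvt s"
      unfolding Un_iff mem_fvf_All by (auto dest: mem_fvf_substf)
  qed
next
  case (7 s A)
  show ?case
  proof
    fix i
    assume "i \<in> fvf (realF s A)"
    then have "Suc i \<in> fvf (refF (Var 0) (liftf 0 A)) \<or> Suc i \<in> fvt (liftt 0 s)"
      by (simp only: realF.simps mem_fvf_All) simp
    then show "i \<in> fvf A \<union> fvt s"
      using 7 by (auto simp: mem_fvf_liftf mem_fvt_liftt)
  qed
qed (auto simp: Conj_def Fls_def)

lemma sentence_refF: "sentence A \<Longrightarrow> sentence (refF (num x) A)"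
  and sentence_realF: "sentence A \<Longrightarrow> sentence (realF (num x) A)"
  using fvf_refF_realF[of "num x" A] by (auto simp: sentence_def)

text \<open>No interpretation of the \<open>T\<close>-symbols is needed: \<open>s \<in> \<parallel>t T\<^sub>b u\<parallel>\<close> is the
  \<open>F\<close>-atom \<open>s F\<^sub>b \<ulcorner>t \<in> |u|\<urcorner>\<close>.\<close>

fun ref_sem :: "nat set \<Rightarrow> ('o \<Rightarrow> (nat \<times> nat) set) \<Rightarrow> (nat \<Rightarrow> nat) \<Rightarrow> 'o::countable fm \<Rightarrow> nat set"
where
  "ref_sem P FF e (Eq t u) = {n. teval t e = teval u e \<longrightarrow> n \<in> P}"
| "ref_sem P FF e (InPole t) = {n. teval t e \<in> P \<longrightarrow> n \<in> P}"
| "ref_sem P FF e (Ff b t u) = {n. (n, dotref TYPE('o) (teval t e) (teval u e)) \<in> FF b}"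
| "ref_sem P FF e (Tf b t u) = {n. (n, dotreal TYPE('o) (teval t e) (teval u e)) \<in> FF b}"
| "ref_sem P FF e (Imp A B) =
     {n. (\<forall>m \<in> ref_sem P FF e A. pair (p0 n) m \<in> P) \<and> p1 n \<in> ref_sem P FF e B}"
| "ref_sem P FF e (All A) = {n. p1 n \<in> ref_sem P FF (shift (p0 n) e) A}"

lemma ref_sem_liftf: "ref_sem P FF (env_insert k v e) (liftf k A) = ref_sem P FF e A"
proof (induction A arbitrary: k e)
  case (All A)
  then show ?case by (simp add: env_insert_Suc_shift[symmetric])
qed (auto simp: teval_liftt)

lemma ref_sem_liftf_0: "ref_sem P FF (shift v e) (liftf 0 A) = ref_sem P FF e A"
  using ref_sem_liftf[of P FF 0 v e A] by (simp add: env_insert_0)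

lemma ref_sem_substf: "ref_sem P FF e (substf k s A) = ref_sem P FF (env_insert k (teval s e) e) A"
proof (induction A arbitrary: k e s)
  case (All A)
  then show ?case by (simp add: env_insert_Suc_shift teval_liftt_0)
qed (auto simp: teval_substt)

lemma sat_Fls: "\<not> sat P FF TT e Fls"
  by (simp add: Fls_def arg_def)

lemma sat_Conj: "sat P FF TT e (Conj A B) \<longleftrightarrow> sat P FF TT e A \<and> sat P FF TT e B"
  by (auto simp: Conj_def sat_Fls)

lemma sat_refF_realF:
  "sat P FF TT e (refF s A) \<longleftrightarrow> teval s e \<in> ref_sem P FF e A"
  "sat P FF TT e (realF s A) \<longleftrightarrow> (\<forall>m \<in> ref_sem P FF e A. pair (teval s e) m \<in> P)"
proof (induction s A and s A arbitrary: e and e rule: refF_realF.induct)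
  case (6 s A)
  then show ?case by (simp add: inst_def ref_sem_substf env_insert_0)
next
  case (7 s A)
  then show ?case by (auto simp: ref_sem_liftf_0 teval_liftt_0)
qed (auto simp: sat_Conj)

lemma code_eq_iff: "code A = code B \<longleftrightarrow> A = B"
  by (simp add: code_def)

lemma the_sentence_code: "sentence A \<Longrightarrow> (THE B. sentence B \<and> code B = code A) = A"
  by (rule the_equality) (auto simp: code_eq_iff)

lemma decode_eq_code_iff:
  fixes G :: "'o::countable fm \<Rightarrow> 'o fm"
  assumes "sentence B"
  shows "(if \<exists>A :: 'o fm. sentence A \<and> code A = y then code (G (THE A. sentence A \<and> code A = y))
          else code (Eq (Var 0) (Var 0) :: 'o fm)) = code B
     \<longleftrightarrow> (\<exists>A. sentence A \<and> y = code A \<and> B = G A)"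
proof (cases "\<exists>A :: 'o fm. sentence A \<and> y = code A")
  case True
  then obtain A :: "'o fm" where A: "sentence A" "y = code A" by blast
  then have "(THE A. sentence A \<and> code A = y) = A" "\<exists>A :: 'o fm. sentence A \<and> code A = y"
    using the_sentence_code[of A] by auto
  then have "?thesis \<longleftrightarrow> (G A = B \<longleftrightarrow> (\<exists>A'. sentence A' \<and> y = code A' \<and> B = G A'))"
    by (simp add: code_eq_iff)
  then show ?thesis using A by (auto simp: code_eq_iff)
next
  case False
  then show ?thesis using assms by (auto simp: code_eq_iff sentence_def)
qed

lemma dotref_eq_code_iff:
  "sentence (B :: 'o::countable fm) \<Longrightarrow>
    dotref TYPE('o) x y = code B \<longleftrightarrow> (\<exists>A. sentence A \<and> y = code A \<and> B = refF (num x) A)"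
  unfolding dotref_def by (rule decode_eq_code_iff)

lemma dotreal_eq_code_iff:
  "sentence (B :: 'o::countable fm) \<Longrightarrow>
    dotreal TYPE('o) x y = code B \<longleftrightarrow> (\<exists>A. sentence A \<and> y = code A \<and> B = realF (num x) A)"
  unfolding dotreal_def by (rule decode_eq_code_iff)

lemma rs_cong: "(\<And>c. c \<in> ords A \<Longrightarrow> R c = R' c) \<Longrightarrow> rs P R A = rs P R' A"
proof (induction P R A rule: rs.induct)
  case (6 P R A)
  then show ?case by (simp add: inst_def)
qed auto

lemma NR_unfold: "NR P \<delta> A = rs P (\<lambda>d B. if d < \<delta> then NR P d B else {}) A"
  unfolding NR_def
  by (subst wfrec[OF wf], rule arg_cong[where f="\<lambda>R. rs P R A"]) (auto simp: fun_eq_iff cut_apply)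

lemma NR_below:
  assumes "\<forall>c \<in> ords A. c < \<beta>" and "\<beta> \<le> \<gamma>"
  shows "NR P \<gamma> A = NR P \<beta> A"
  unfolding NR_unfold[of P \<gamma> A] NR_unfold[of P \<beta> A]
  using assms by (intro rs_cong) (auto simp: fun_eq_iff)

lemma mem_FFset_iff:
  assumes "\<beta> \<le> \<gamma>"
  shows "(n, l) \<in> FFset P \<gamma> \<beta> \<longleftrightarrow> (\<exists>B. sent_lt \<beta> B \<and> l = code B \<and> n \<in> NR P \<beta> B)"
proof -
  have "NR P \<gamma> B = NR P \<beta> B" if "sent_lt \<beta> B" for B
    using that assms by (intro NR_below) (auto simp: sent_lt_def)
  then show ?thesis by (auto simp: FFset_def refset_def)
qed

lemma mem_FFset_decode_iff:
  fixes G :: "'o::{countable,wellorder} fm \<Rightarrow> 'o fm"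
  assumes "\<beta> \<le> \<gamma>"
    and decode: "\<And>B. sentence B \<Longrightarrow> l = code B \<longleftrightarrow> (\<exists>A. sentence A \<and> y = code A \<and> B = G A)"
    and ords_G: "\<And>A. ords (G A) = ords A"
    and sentence_G: "\<And>A. sentence A \<Longrightarrow> sentence (G A)"
  shows "(n, l) \<in> FFset P \<gamma> \<beta> \<longleftrightarrow> (\<exists>A. sent_lt \<beta> A \<and> y = code A \<and> n \<in> NR P \<beta> (G A))"
proof
  assume "(n, l) \<in> FFset P \<gamma> \<beta>"
  then obtain B where B: "sent_lt \<beta> B" "l = code B" "n \<in> NR P \<beta> B"
    using assms(1) mem_FFset_iff by blast
  then have "sentence B" by (simp add: sent_lt_def)
  then obtain A where A: "sentence A" "y = code A" "B = G A"
    using decode B(2) by blast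
  then have "sent_lt \<beta> A"
    using B(1) ords_G by (simp add: sent_lt_def)
  then show "\<exists>A. sent_lt \<beta> A \<and> y = code A \<and> n \<in> NR P \<beta> (G A)"
    using A B(3) by blast
next
  assume "\<exists>A. sent_lt \<beta> A \<and> y = code A \<and> n \<in> NR P \<beta> (G A)"
  then obtain A where A: "sent_lt \<beta> A" "y = code A" "n \<in> NR P \<beta> (G A)" by blast
  then have "sent_lt \<beta> (G A)"
    using sentence_G ords_G by (simp add: sent_lt_def)
  moreover have "l = code (G A)"
    using decode A(1,2) sentence_G by (blast dest: sent_lt_def[THEN iffD1])
  ultimately show "(n, l) \<in> FFset P \<gamma> \<beta>"
    using A(3) assms(1) mem_FFset_iff by blast
qed

abbreviation FF_interp :: "nat set \<Rightarrow> 'o::{countable,wellorder} \<Rightarrow> 'o \<Rightarrow> (nat \<times> nat) set" where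
  "FF_interp P \<gamma> \<equiv> \<lambda>b. if b < \<gamma> then FFset P \<gamma> b else {}"

lemma rs_eq_ref_sem:
  fixes \<gamma> :: "'o::{countable,wellorder}"
  assumes "R = (\<lambda>d B. if d < \<gamma> then NR P d B else {})"
  shows "rs P R A = ref_sem P (FF_interp P \<gamma>) (\<lambda>_. 0) A"
  using assms
proof (induction P R A rule: rs.induct)
  case (3 P R b t u)
  have "(n, dotref TYPE('o) x y) \<in> FFset P \<gamma> b
      \<longleftrightarrow> (\<exists>A. sent_lt b A \<and> y = code A \<and> n \<in> NR P b (refF (num x) A))"
    if "b < \<gamma>" for n x y
    using that
    by (intro mem_FFset_decode_iff[where G = "refF (num x)"])
      (auto simp: dotref_eq_code_iff ords_refF_realF sentence_refF)
  with 3 show ?case by auto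
next
  case (4 P R b t u)
  have "(n, dotreal TYPE('o) x y) \<in> FFset P \<gamma> b
      \<longleftrightarrow> (\<exists>A. sent_lt b A \<and> y = code A \<and> n \<in> NR P b (realF (num x) A))"
    if "b < \<gamma>" for n x y
    using that
    by (intro mem_FFset_decode_iff[where G = "realF (num x)"])
      (auto simp: dotreal_eq_code_iff ords_refF_realF sentence_realF simp del: realF.simps)
  with 4 show ?case by auto
next
  case (6 P R A)
  then show ?case by (simp add: inst_def ref_sem_substf env_insert_0)
qed auto

lemma NR_eq_ref_sem: "NR P \<gamma> A = ref_sem P (FF_interp P \<gamma>) (\<lambda>_. 0) A"
  by (simp add: NR_unfold[of P \<gamma> A] rs_eq_ref_sem)

lemma mem_FFset_code_iff: "sent_lt \<beta> A \<Longrightarrow> (n, code A) \<in> FFset P \<gamma> \<beta> \<longleftrightarrow> n \<in> refset P \<gamma> A"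
  by (auto simp: FFset_def code_eq_iff)

lemma mem_TTset_code_iff: "sent_lt \<beta> A \<Longrightarrow> (n, code A) \<in> TTset P \<gamma> \<beta> \<longleftrightarrow> n \<in> realset P \<gamma> A"
  by (auto simp: TTset_def code_eq_iff)

theorem lemma10:
  fixes P :: "nat set" and \<gamma> \<beta> :: "'o::{countable,wellorder}" and A :: "'o fm" and a :: nat
  assumes "is_pole P" and "\<beta> < \<gamma>" and "sent_lt \<beta> A"
  shows "(models P \<gamma> (Ff \<beta> (num a) (num (code A))) \<longleftrightarrow> models P \<gamma> (refF (num a) A))
       \<and> (models P \<gamma> (Tf \<beta> (num a) (num (code A))) \<longleftrightarrow> models P \<gamma> (realF (num a) A))"
proof -
  have "models P \<gamma> (Ff \<beta> (num a) (num (code A))) \<longleftrightarrow> a \<in> refset P \<gamma> A"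
    using assms by (simp add: models_def mem_FFset_code_iff)
  moreover have "models P \<gamma> (refF (num a) A) \<longleftrightarrow> a \<in> refset P \<gamma> A"
    by (simp add: models_def sat_refF_realF refset_def NR_eq_ref_sem)
  moreover have "models P \<gamma> (Tf \<beta> (num a) (num (code A))) \<longleftrightarrow> a \<in> realset P \<gamma> A"
    using assms by (simp add: models_def mem_TTset_code_iff)
  moreover have "models P \<gamma> (realF (num a) A) \<longleftrightarrow> a \<in> realset P \<gamma> A"
    by (simp add: models_def sat_refF_realF realset_def refset_def NR_eq_ref_sem del: realF.simps)
  ultimately show ?thesis by simp
qed

end
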